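(* For every $\delta\in(0,1]$ there is a constant $c_\delta>0$ such that the following holds. Let $A=\{a_1<a_2<\dots<a_k\}\subset\mathbb{R}$ and let $D=\{a_{i+1}-a_i: 1\le i\le k-1\}$ be its set of consecutive differences. If $|D|\ge \delta|A|$, then for every finite nonempty $B\subset\mathbb{R}$, \[ |A+B|\ge c_\delta\,|A|\,|B|^{1/2}. \]
   Context: For finite $A,B\subset\mathbb{R}$, $A+B=\{a+b: a\in A, b\in B\}$. *)

theory Defs
  imports Complex_Main
begin

definition sumset :: "real set \<Rightarrow> real set \<Rightarrow> real set" where
  "sumset A B = {a + b | a b. a \<in> A \<and> b \<in> B}"

definition cons_diffs :: "real set \<Rightarrow> real set" where
  "cons_diffs A = (let s = sorted_list_of_set A in
     {s ! (i + 1) - s ! i | i. i + 1 < length s})"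

end

theory Submission
  imports Defs
begin

text \<open>Let \<open>a(1) < \<dots> < a(k)\<close> be the elements of \<open>A\<close>, \<open>S = A + B\<close>, and pick a set \<open>I\<close> of
  indices whose gaps \<open>a(i+1) - a(i)\<close> are pairwise distinct, so \<open>|I| = |D|\<close>. To \<open>(b, i) \<in> B \<times> I\<close>
  attach the point \<open>a(i) + b \<in> S\<close> and the weight \<open>w(b, i) \<ge> 1\<close>, the number of elements of \<open>S\<close> in
  \<open>(a(i) + b, a(i+1) + b]\<close>. Point and weight determine \<open>a(i+1) + b\<close> (the \<open>w\<close>-th element of \<open>S\<close>
  after the point), hence the gap, hence \<open>i\<close> and \<open>b\<close>. So at most \<open>|S| t\<close> pairs have weight
  \<open>\<le> t\<close>, which forces the total weight to be at least \<open>(|B| |D|)\<^sup>2 / (4 |S|)\<close>. For fixed \<open>b\<close>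
  the intervals are disjoint, so the total weight is at most \<open>|B| |S|\<close>; hence
  \<open>|D| sqrt |B| \<le> 2 |A + B|\<close>, and \<open>c = \<delta>/2\<close> works.\<close>

lemma card_sq_le_mult_sum_weights:
  fixes h :: "'a \<Rightarrow> 'b" and w :: "'a \<Rightarrow> nat"
  assumes fS: "finite S" and fP: "finite P" and hP: "h ` P \<subseteq> S"
    and w_pos: "\<And>p. p \<in> P \<Longrightarrow> 1 \<le> w p"
    and inj: "inj_on (\<lambda>p. (h p, w p)) P"
  shows "card P ^ 2 \<le> 4 * card S * (\<Sum>p\<in>P. w p)"
proof (cases "S = {}")
  case True
  then show ?thesis using hP by simp
next
  case False
  define N where "N = card S"
  define M where "M = card P"
  define T where "T = M div (2 * N)" \<comment> \<open>the threshold balancing \<open>N T\<close> against \<open>M\<close>\<close>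
  define L where "L = {p \<in> P. w p \<le> T}"
  have N_pos: "N > 0" using False fS by (simp add: N_def card_gt_0_iff)
  have "card L \<le> card (S \<times> {1..T})"
  proof (rule card_inj_on_le)
    show "inj_on (\<lambda>p. (h p, w p)) L" using inj by (rule inj_on_subset) (auto simp: L_def)
    show "(\<lambda>p. (h p, w p)) ` L \<subseteq> S \<times> {1..T}" using hP w_pos by (auto simp: L_def)
  qed (use fS in simp)
  then have card_L: "card L \<le> N * T" by (simp add: N_def card_cartesian_product)
  have "M - N * T \<le> card (P - L)"
    using card_L card_Diff_subset[of L P] fP by (simp add: M_def L_def)
  then have "(T + 1) * (M - N * T) \<le> (T + 1) * card (P - L)" by (rule mult_le_mono2)
  also have "\<dots> = (\<Sum>p\<in>P - L. T + 1)" by simp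
  also have "\<dots> \<le> (\<Sum>p\<in>P - L. w p)" by (rule sum_mono) (auto simp: L_def)
  also have "\<dots> \<le> (\<Sum>p\<in>P. w p)" using fP by (intro sum_mono2) auto
  finally have weight: "(T + 1) * (M - N * T) \<le> (\<Sum>p\<in>P. w p)" .
  have M_eq: "M = 2 * N * T + M mod (2 * N)" by (simp add: T_def)
  have "M mod (2 * N) < 2 * N" using N_pos by simp
  then have "M \<le> 2 * N * T + 2 * N" using M_eq by linarith
  then have "M \<le> 2 * N * (T + 1)" by simp
  moreover have "M \<le> 2 * (M - N * T)" using M_eq by linarith
  ultimately have "M * M \<le> (2 * N * (T + 1)) * (2 * (M - N * T))" by (rule mult_le_mono)
  also have "\<dots> = 4 * N * ((T + 1) * (M - N * T))" by (simp only: ac_simps)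
  also have "\<dots> \<le> 4 * N * (\<Sum>p\<in>P. w p)" using weight by simp
  finally show ?thesis by (simp only: M_def N_def power2_eq_square)
qed

definition count_between :: "'a::linorder set \<Rightarrow> 'a \<Rightarrow> 'a \<Rightarrow> nat" where
  "count_between S x y = card {z \<in> S. x < z \<and> z \<le> y}"

lemma count_between_pos:
  assumes "finite S" "y \<in> S" "x < y"
  shows "0 < count_between S x y"
  using assms by (auto simp: count_between_def card_gt_0_iff)

lemma count_between_strict_mono:
  assumes "finite S" "y < y'" "y' \<in> S" "x < y'"
  shows "count_between S x y < count_between S x y'"
  unfolding count_between_def
proof (rule psubset_card_mono)
  show "{z \<in> S. x < z \<and> z \<le> y} \<subset> {z \<in> S. x < z \<and> z \<le> y'}"
  proof
    show "{z \<in> S. x < z \<and> z \<le> y} \<subseteq> {z \<in> S. x < z \<and> z \<le> y'}"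
      using assms by auto
    have "y' \<in> {z \<in> S. x < z \<and> z \<le> y'}" "y' \<notin> {z \<in> S. x < z \<and> z \<le> y}"
      using assms by auto
    then show "{z \<in> S. x < z \<and> z \<le> y} \<noteq> {z \<in> S. x < z \<and> z \<le> y'}" by blast
  qed
qed (use assms in simp)

lemma count_between_inj:
  assumes "finite S" "y \<in> S" "y' \<in> S" "x < y" "x < y'"
    and "count_between S x y = count_between S x y'"
  shows "y = y'"
proof (cases y y' rule: linorder_cases)
  case less
  then show ?thesis using count_between_strict_mono[of S y y' x] assms by simp
next
  case greater
  then show ?thesis using count_between_strict_mono[of S y' y x] assms by simp
qed

lemma sum_count_between_sorted_le:
  fixes s :: "'a::linorder list"
  assumes "finite S" "sorted s" "I \<subseteq> {i. i + 1 < length s}"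
  shows "(\<Sum>i\<in>I. count_between S (s ! i) (s ! (i + 1))) \<le> card S"
proof -
  define F where "F i = {z \<in> S. s ! i < z \<and> z \<le> s ! (i + 1)}" for i
  have fin_I: "finite I"
    by (rule finite_subset[OF _ finite_lessThan[of "length s"]]) (use assms(3) in auto)
  have disj: "F i \<inter> F j = {}" if "i \<in> I" "j \<in> I" "i < j" for i j
  proof -
    have "s ! (i + 1) \<le> s ! j" using sorted_nth_mono[OF \<open>sorted s\<close>] that assms(3) by auto
    then show ?thesis by (auto simp: F_def)
  qed
  have "(\<Sum>i\<in>I. count_between S (s ! i) (s ! (i + 1))) = (\<Sum>i\<in>I. card (F i))"
    by (simp add: count_between_def F_def)
  also have "\<dots> = card (\<Union>i\<in>I. F i)"
  proof (rule card_UN_disjoint[symmetric])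
    show "\<forall>i\<in>I. finite (F i)" using assms(1) by (simp add: F_def)
    show "\<forall>i\<in>I. \<forall>j\<in>I. i \<noteq> j \<longrightarrow> F i \<inter> F j = {}"
    proof (intro ballI impI)
      fix i j assume "i \<in> I" "j \<in> I" "i \<noteq> j"
      then consider "i < j" | "j < i" by linarith
      then show "F i \<inter> F j = {}"
        using disj[of i j] disj[of j i] \<open>i \<in> I\<close> \<open>j \<in> I\<close> by cases blast+
    qed
  qed (rule fin_I)
  also have "\<dots> \<le> card S" using assms(1) by (intro card_mono) (auto simp: F_def)
  finally show ?thesis .
qed

lemma sum_count_between_translates_le:
  fixes s :: "'a::linordered_ab_group_add list"
  assumes "finite S" "sorted s" "I \<subseteq> {i. i + 1 < length s}"
  shows "(\<Sum>(b, i)\<in>B \<times> I. count_between S (s ! i + b) (s ! (i + 1) + b)) \<le> card B * card S"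
proof -
  have "(\<Sum>i\<in>I. count_between S (s ! i + b) (s ! (i + 1) + b)) \<le> card S" for b
  proof -
    define t where "t = map (\<lambda>a. a + b) s"
    have "sorted t" using \<open>sorted s\<close> by (simp add: t_def sorted_map)
    have "(\<Sum>i\<in>I. count_between S (s ! i + b) (s ! (i + 1) + b))
        = (\<Sum>i\<in>I. count_between S (t ! i) (t ! (i + 1)))"
      using assms(3) by (intro sum.cong) (auto simp: t_def)
    also have "\<dots> \<le> card S"
      using sum_count_between_sorted_le[OF \<open>finite S\<close> \<open>sorted t\<close>] assms(3) by (simp add: t_def)
    finally show ?thesis .
  qed
  then have "(\<Sum>b\<in>B. \<Sum>i\<in>I. count_between S (s ! i + b) (s ! (i + 1) + b)) \<le> (\<Sum>b\<in>B. card S)"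
    by (intro sum_mono)
  then show ?thesis by (simp add: sum.cartesian_product)
qed

lemma inj_on_translate_count_between:
  fixes s :: "'a::linordered_ab_group_add list"
  assumes "finite S" "sorted_wrt (<) s" "I \<subseteq> {i. i + 1 < length s}"
    and gaps_inj: "inj_on (\<lambda>i. s ! (i + 1) - s ! i) I"
    and in_S: "\<And>i b. i < length s \<Longrightarrow> b \<in> B \<Longrightarrow> s ! i + b \<in> S"
  shows "inj_on (\<lambda>(b, i). (s ! i + b, count_between S (s ! i + b) (s ! (i + 1) + b))) (B \<times> I)"
proof (rule inj_onI, clarify)
  fix b i b' i'
  assume in_P: "b \<in> B" "i \<in> I" "b' \<in> B" "i' \<in> I"
    and same_point: "s ! i + b = s ! i' + b'"
    and same_count: "count_between S (s ! i + b) (s ! (i + 1) + b)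
      = count_between S (s ! i' + b') (s ! (i' + 1) + b')"
  have gap_pos: "s ! j < s ! (j + 1)" if "j \<in> I" for j
    using that assms(3) sorted_wrt_nth_less[OF assms(2), of j "j + 1"] by auto
  have "s ! (i + 1) + b = s ! (i' + 1) + b'"
  proof (rule count_between_inj[OF \<open>finite S\<close>])
    show "s ! (i + 1) + b \<in> S" "s ! (i' + 1) + b' \<in> S" using in_S assms(3) in_P by auto
    show "s ! i + b < s ! (i + 1) + b" using gap_pos in_P by simp
    show "s ! i + b < s ! (i' + 1) + b'" using gap_pos[of i'] in_P same_point by simp
    show "count_between S (s ! i + b) (s ! (i + 1) + b)
        = count_between S (s ! i + b) (s ! (i' + 1) + b')"
      using same_count same_point by simp
  qed
  with same_point have "s ! (i + 1) - s ! i = s ! (i' + 1) - s ! i'"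
    by (metis add_diff_cancel_right diff_diff_eq2)
  then have "i = i'" using in_P by (intro inj_onD[OF gaps_inj]) simp_all
  with same_point show "b = b' \<and> i = i'" by simp
qed

lemma cons_diffs_injective_gap_indices:
  fixes A :: "real set"
  defines "s \<equiv> sorted_list_of_set A"
  obtains I where "I \<subseteq> {i. i + 1 < length s}" and "inj_on (\<lambda>i. s ! (i + 1) - s ! i) I"
    and "card I = card (cons_diffs A)"
proof -
  have "cons_diffs A = (\<lambda>i. s ! (i + 1) - s ! i) ` {i. i + 1 < length s}"
    unfolding cons_diffs_def s_def Let_def by auto
  then have "cons_diffs A \<subseteq> (\<lambda>i. s ! (i + 1) - s ! i) ` {i. i + 1 < length s}" by simp
  then obtain I where "I \<subseteq> {i. i + 1 < length s}" "inj_on (\<lambda>i. s ! (i + 1) - s ! i) I"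
      "cons_diffs A = (\<lambda>i. s ! (i + 1) - s ! i) ` I"
    unfolding subset_image_inj by blast
  with that show thesis by (simp add: card_image)
qed

lemma finite_sumset:
  assumes "finite A" "finite B"
  shows "finite (sumset A B)"
proof -
  have "sumset A B = (\<lambda>(a, b). a + b) ` (A \<times> B)" by (auto simp: sumset_def)
  then show ?thesis using assms by simp
qed

lemma card_cons_diffs_mult_card_sq_le:
  fixes A B :: "real set"
  assumes "finite A" "finite B"
  shows "(card (cons_diffs A) * card B) ^ 2 \<le> 4 * card (sumset A B) ^ 2 * card B"
proof -
  define s where "s = sorted_list_of_set A"
  define S where "S = sumset A B"
  obtain I where I_sub: "I \<subseteq> {i. i + 1 < length s}"
    and gaps_inj: "inj_on (\<lambda>i. s ! (i + 1) - s ! i) I" and card_I: "card I = card (cons_diffs A)"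
    using cons_diffs_injective_gap_indices unfolding s_def by blast
  have fin_S: "finite S" using assms by (simp add: S_def finite_sumset)
  have in_S: "s ! i + b \<in> S" if "i < length s" "b \<in> B" for i b
    using that assms(1) nth_mem[of i s] by (auto simp: S_def s_def sumset_def)
  have "sorted_wrt (<) s" by (simp add: s_def)
  define h where "h = (\<lambda>(b, i). s ! i + b)"
  define w where "w = (\<lambda>(b, i). count_between S (s ! i + b) (s ! (i + 1) + b))"
  have "card (B \<times> I) ^ 2 \<le> 4 * card S * (\<Sum>p\<in>B \<times> I. w p)"
  proof (rule card_sq_le_mult_sum_weights[OF fin_S])
    have "finite I"
      by (rule finite_subset[OF _ finite_lessThan[of "length s"]]) (use I_sub in auto)
    then show "finite (B \<times> I)" using assms(2) by simp
    show "h ` (B \<times> I) \<subseteq> S" using in_S I_sub by (auto simp: h_def)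
    show "1 \<le> w p" if "p \<in> B \<times> I" for p
      using that count_between_pos[OF fin_S] in_S I_sub sorted_wrt_nth_less[OF \<open>sorted_wrt (<) s\<close>]
      by (auto simp: w_def Suc_le_eq)
    have "(\<lambda>p. (h p, w p))
        = (\<lambda>(b, i). (s ! i + b, count_between S (s ! i + b) (s ! (i + 1) + b)))"
      by (rule ext) (auto simp: h_def w_def)
    then show "inj_on (\<lambda>p. (h p, w p)) (B \<times> I)"
      using inj_on_translate_count_between[where B = B, OF fin_S \<open>sorted_wrt (<) s\<close> I_sub gaps_inj in_S]
      by simp
  qed
  also have "(\<Sum>p\<in>B \<times> I. w p) \<le> card B * card S"
    using sum_count_between_translates_le[OF fin_S _ I_sub] by (simp add: w_def s_def)
  finally show ?thesis
    by (simp add: S_def card_I card_cartesian_product power2_eq_square ac_simps)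
qed

lemma card_cons_diffs_mult_sqrt_le:
  fixes A B :: "real set"
  assumes "finite A" "finite B"
  shows "card (cons_diffs A) * sqrt (card B) \<le> 2 * card (sumset A B)"
proof -
  define m where "m = real (card (cons_diffs A))"
  define b where "b = real (card B)"
  define N where "N = real (card (sumset A B))"
  have "(m * b) ^ 2 \<le> 4 * N ^ 2 * b"
    using of_nat_mono[OF card_cons_diffs_mult_card_sq_le[OF assms]] by (simp add: m_def b_def N_def)
  then have "m ^ 2 * b \<le> 4 * N ^ 2"
    by (cases "b = 0") (auto simp: power_mult_distrib power2_eq_square b_def)
  then have "sqrt (m ^ 2 * b) \<le> sqrt (4 * N ^ 2)" by (rule real_sqrt_le_mono)
  then show ?thesis by (simp add: real_sqrt_mult m_def b_def N_def)
qed

theorem theorem2: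
  fixes \<delta> :: real
  assumes "0 < \<delta>" and "\<delta> \<le> 1"
  shows "\<exists>c > 0. \<forall>A B :: real set. finite A \<longrightarrow> finite B \<longrightarrow> B \<noteq> {} \<longrightarrow>
           real (card (cons_diffs A)) \<ge> \<delta> * real (card A) \<longrightarrow>
           real (card (sumset A B)) \<ge> c * real (card A) * sqrt (real (card B))"
proof (intro exI[of _ "\<delta> / 2"] conjI allI impI)
  show "\<delta> / 2 > 0" using \<open>0 < \<delta>\<close> by simp
  fix A B :: "real set"
  assume "finite A" "finite B" "B \<noteq> {}" and dense: "\<delta> * card A \<le> card (cons_diffs A)"
  have "\<delta> * card A * sqrt (card B) \<le> card (cons_diffs A) * sqrt (card B)"
    using dense by (rule mult_right_mono) simp
  also have "\<dots> \<le> 2 * card (sumset A B)"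
    using card_cons_diffs_mult_sqrt_le \<open>finite A\<close> \<open>finite B\<close> by blast
  finally show "\<delta> / 2 * card A * sqrt (card B) \<le> card (sumset A B)" by simp
qed

end
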